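(* Suppose Assumptions 1–4 hold and $p$ is convex. Suppose also that $p(Q)=0$ for some $Q>0$ and that the ratio $\mu=\partial_+p(0)/\partial_-p(Q)$ is finite. Then every Cournot candidate $\mathbf{x}$ satisfies $\gamma(\mathbf{x})\ge f(\mu)$.
   Context: Cournot model: $N$ suppliers, inverse demand $p:[0,\infty)\to[0,\infty)$, supplier $n$ has cost $C_n:[0,\infty)\to[0,\infty)$ and chooses $x_n\ge0$; $X=\sum_n x_n$. $\partial_\pm$ denote right/left derivatives; $C_n'(0)$ is the right derivative at $0$. Assumption 1: each $C_n$ is convex, continuous, nondecreasing on $[0,\infty)$, continuously differentiable on $(0,\infty)$, with $C_n(0)=0$. Assumption 2: $p$ is continuous, nonnegative, nonincreasing, $p(0)>0$; its right derivative at $0$ exists and at every $q>0$ its left and right derivatives exist. Assumption 3: there exists $R>0$ such that $p(R)\le\min_n C_n'(0)$. Assumption 4: $p(0)>\min_n C_n'(0)$. Social welfare of $\mathbf{x}\ge0$: $W(\mathbf{x})=\int_0^X p(q)\,dq-\sum_{n=1}^N C_n(x_n)$; a social optimum $\mathbf{x}^S$ maximizes $W$. Efficiency: $\gamma(\mathbf{x})=W(\mathbf{x})/W(\mathbf{x}^S)$. A nonnegative vector $\mathbf{x}$ is a Cournot candidate if for every $n$: $C_n'(x_n)\le p(X)+x_n\,\partial_-p(X)$ whenever $x_n>0$, and $C_n'(x_n)\ge p(X)+x_n\,\partial_+p(X)$. For $\overline c\ge1$: $f(\overline c)=\dfrac{\phi^2+2}{\phi^2+2\phi+\overline c}$ with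 $\phi=\max\left\{\dfrac{2-\overline c+\sqrt{\overline c^{\,2}-4\overline c+12}}{2},1\right\}$. *)

theory Defs
  imports "HOL-Analysis.Analysis"
begin

definition right_deriv :: "(real \<Rightarrow> real) \<Rightarrow> real \<Rightarrow> real" where
  "right_deriv f x = (THE d. (f has_real_derivative d) (at_right x))"

definition left_deriv :: "(real \<Rightarrow> real) \<Rightarrow> real \<Rightarrow> real" where
  "left_deriv f x = (THE d. (f has_real_derivative d) (at_left x))"

definition cost_deriv :: "(real \<Rightarrow> real) \<Rightarrow> real \<Rightarrow> real" where
  "cost_deriv C x = (if x = 0 then right_deriv C 0 else deriv C x)"

definition cost_ok :: "(real \<Rightarrow> real) \<Rightarrow> bool" where
  "cost_ok C \<longleftrightarrow> (\<forall>x\<ge>0. C x \<ge> 0) \<and> convex_on {0..} C \<and> continuous_on {0..} C \<and>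
     (\<forall>x y. 0 \<le> x \<longrightarrow> x \<le> y \<longrightarrow> C x \<le> C y) \<and>
     (\<forall>x>0. C differentiable (at x)) \<and> continuous_on {0<..} (deriv C) \<and> C 0 = 0"

definition demand_ok :: "(real \<Rightarrow> real) \<Rightarrow> bool" where
  "demand_ok p \<longleftrightarrow> continuous_on {0..} p \<and> (\<forall>q\<ge>0. p q \<ge> 0) \<and>
     (\<forall>x y. 0 \<le> x \<longrightarrow> x \<le> y \<longrightarrow> p y \<le> p x) \<and> p 0 > 0 \<and>
     (\<forall>q\<ge>0. \<exists>d. (p has_real_derivative d) (at_right q)) \<and>
     (\<forall>q>0. \<exists>d. (p has_real_derivative d) (at_left q))"

definition min_mc0 :: "nat \<Rightarrow> (nat \<Rightarrow> real \<Rightarrow> real) \<Rightarrow> real" where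
  "min_mc0 N C = Min ((\<lambda>n. cost_deriv (C n) 0) ` {..<N})"

definition total :: "nat \<Rightarrow> (nat \<Rightarrow> real) \<Rightarrow> real" where
  "total N x = (\<Sum>n<N. x n)"

definition nonneg_vec :: "nat \<Rightarrow> (nat \<Rightarrow> real) \<Rightarrow> bool" where
  "nonneg_vec N x \<longleftrightarrow> (\<forall>n<N. x n \<ge> 0)"

definition welfare :: "nat \<Rightarrow> (real \<Rightarrow> real) \<Rightarrow> (nat \<Rightarrow> real \<Rightarrow> real) \<Rightarrow> (nat \<Rightarrow> real) \<Rightarrow> real" where
  "welfare N p C x = integral {0..total N x} p - (\<Sum>n<N. C n (x n))"

definition social_optimum :: "nat \<Rightarrow> (real \<Rightarrow> real) \<Rightarrow> (nat \<Rightarrow> real \<Rightarrow> real) \<Rightarrow> (nat \<Rightarrow> real) \<Rightarrow> bool" where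
  "social_optimum N p C xS \<longleftrightarrow> nonneg_vec N xS \<and>
     (\<forall>x. nonneg_vec N x \<longrightarrow> welfare N p C x \<le> welfare N p C xS)"

definition efficiency :: "nat \<Rightarrow> (real \<Rightarrow> real) \<Rightarrow> (nat \<Rightarrow> real \<Rightarrow> real) \<Rightarrow> (nat \<Rightarrow> real) \<Rightarrow> (nat \<Rightarrow> real) \<Rightarrow> real" where
  "efficiency N p C xS x = welfare N p C x / welfare N p C xS"

definition cournot_candidate :: "nat \<Rightarrow> (real \<Rightarrow> real) \<Rightarrow> (nat \<Rightarrow> real \<Rightarrow> real) \<Rightarrow> (nat \<Rightarrow> real) \<Rightarrow> bool" where
  "cournot_candidate N p C x \<longleftrightarrow> nonneg_vec N x \<and>
     (\<forall>n<N. (x n > 0 \<longrightarrow> cost_deriv (C n) (x n) \<le> p (total N x) + x n * left_deriv p (total N x)) \<and>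
            cost_deriv (C n) (x n) \<ge> p (total N x) + x n * right_deriv p (total N x))"

definition phi_bound :: "real \<Rightarrow> real" where
  "phi_bound c = max ((2 - c + sqrt (c\<^sup>2 - 4 * c + 12)) / 2) 1"

definition f_bound :: "real \<Rightarrow> real" where
  "f_bound c = ((phi_bound c)\<^sup>2 + 2) / ((phi_bound c)\<^sup>2 + 2 * phi_bound c + c)"

end

theory Submission
  imports Defs
begin

(* Let x be a Cournot candidate with total output X and largest output s, and let
   d = -p'_-(X), h = -p'_+(0), g = -p'_-(Q).  Convexity of the costs bounds the welfare
   of every output vector from above by its tangent-line linearisation at x, and convexity
   of the demand bounds p beyond X by the line of slope -g; the welfare of a social
   optimum is therefore at most I + wX + w^2/(2g) + K, where I is the consumer surplus at
   x, w the markup of the price over the lowest marginal cost and K >= 0 the cost gap.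
   The candidate conditions give W(x) >= I + d s^2 + K and I >= d X^2/2, and the
   choice of phi in f makes f(h/g) (I + wX + w^2/(2g)) <= I + d s^2 an elementary
   quadratic inequality (a perfect square). *)

lemma right_deriv_eq:
  "(f has_real_derivative d) (at_right x) \<Longrightarrow> right_deriv f x = d"
  unfolding right_deriv_def
  by (rule the_equality) (auto intro: has_field_derivative_unique)

lemma left_deriv_eq:
  "(f has_real_derivative d) (at_left x) \<Longrightarrow> left_deriv f x = d"
  unfolding left_deriv_def
  by (rule the_equality) (auto intro: has_field_derivative_unique)

lemma has_right_deriv:
  "\<exists>d. (f has_real_derivative d) (at_right x) \<Longrightarrow> (f has_real_derivative right_deriv f x) (at_right x)"
  using right_deriv_eq by metis

lemma has_left_deriv:
  "\<exists>d. (f has_real_derivative d) (at_left x) \<Longrightarrow> (f has_real_derivative left_deriv f x) (at_left x)"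
  using left_deriv_eq by metis

lemma slope_swap: "(a - b) / (c - d) = (b - a) / (d - (c :: real))"
  by (metis minus_diff_eq divide_minus_left divide_minus_right)

lemma convex_chord_le_left_deriv:
  fixes f :: "real \<Rightarrow> real"
  assumes cv: "convex_on {0..} f" and z: "0 \<le> z" "z < x"
    and L: "(f has_real_derivative L) (at_left x)"
  shows "(f x - f z) / (x - z) \<le> L"
proof -
  have "((\<lambda>y. (f y - f x) / (y - x)) \<longlongrightarrow> L) (at_left x)"
    using L by (simp add: has_field_derivative_iff)
  moreover have "eventually (\<lambda>y. y \<in> {z<..<x}) (at_left x)"
    using z eventually_at_left_real by blast
  then have "eventually (\<lambda>y. (f x - f z) / (x - z) \<le> (f y - f x) / (y - x)) (at_left x)"
  proof (rule eventually_mono)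
    fix y assume y: "y \<in> {z<..<x}"
    have "(f z - f x) / (z - x) \<le> (f y - f x) / (y - x)"
      using convex_on_slope_le(2)[OF cv, of z x y] y z by auto
    then show "(f x - f z) / (x - z) \<le> (f y - f x) / (y - x)"
      by (simp add: slope_swap)
  qed
  ultimately show ?thesis by (intro tendsto_lowerbound) auto
qed

lemma right_deriv_le_convex_chord:
  fixes f :: "real \<Rightarrow> real"
  assumes cv: "convex_on {0..} f" and z: "0 \<le> x" "x < z"
    and R: "(f has_real_derivative R) (at_right x)"
  shows "R \<le> (f z - f x) / (z - x)"
proof -
  have "((\<lambda>y. (f y - f x) / (y - x)) \<longlongrightarrow> R) (at_right x)"
    using R by (simp add: has_field_derivative_iff)
  moreover have "eventually (\<lambda>y. y \<in> {x<..<z}) (at_right x)"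
    using z eventually_at_right_real by blast
  then have "eventually (\<lambda>y. (f y - f x) / (y - x) \<le> (f z - f x) / (z - x)) (at_right x)"
  proof (rule eventually_mono)
    fix y assume y: "y \<in> {x<..<z}"
    have "(f x - f y) / (x - y) \<le> (f x - f z) / (x - z)"
      using convex_on_slope_le(1)[OF cv, of x z y] y z by auto
    then show "(f y - f x) / (y - x) \<le> (f z - f x) / (z - x)"
      by (simp add: slope_swap)
  qed
  ultimately show ?thesis by (intro tendsto_upperbound) auto
qed

lemma convex_slope_mono:
  fixes f :: "real \<Rightarrow> real"
  assumes cv: "convex_on {0..} f" and "0 \<le> y" "y < x" "x < u"
  shows "(f x - f y) / (x - y) \<le> (f u - f x) / (u - x)"
proof -
  have "(f y - f x) / (y - x) \<le> (f y - f u) / (y - u)"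
    using convex_on_slope_le(1)[OF cv, of y u x] assms by auto
  also have "\<dots> \<le> (f x - f u) / (x - u)"
    using convex_on_slope_le(2)[OF cv, of y u x] assms by auto
  finally show ?thesis by (simp add: slope_swap)
qed

lemma convex_chord_le_right_deriv:
  fixes f :: "real \<Rightarrow> real"
  assumes cv: "convex_on {0..} f" and y: "0 \<le> y" "y < x"
    and R: "(f has_real_derivative R) (at_right x)"
  shows "(f x - f y) / (x - y) \<le> R"
proof -
  have "((\<lambda>u. (f u - f x) / (u - x)) \<longlongrightarrow> R) (at_right x)"
    using R by (simp add: has_field_derivative_iff)
  moreover have "eventually (\<lambda>u. u \<in> {x<..<x+1}) (at_right x)"
    using eventually_at_right_real by simp
  then have "eventually (\<lambda>u. (f x - f y) / (x - y) \<le> (f u - f x) / (u - x)) (at_right x)"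
    by (rule eventually_mono) (use convex_slope_mono[OF cv y] in auto)
  ultimately show ?thesis by (intro tendsto_lowerbound) auto
qed

lemma convex_left_deriv_le_right_deriv:
  fixes f :: "real \<Rightarrow> real"
  assumes cv: "convex_on {0..} f" and x: "0 < x"
    and L: "(f has_real_derivative L) (at_left x)"
    and R: "(f has_real_derivative R) (at_right x)"
  shows "L \<le> R"
proof -
  have "((\<lambda>y. (f y - f x) / (y - x)) \<longlongrightarrow> L) (at_left x)"
    using L by (simp add: has_field_derivative_iff)
  moreover have "eventually (\<lambda>y. y \<in> {0<..<x}) (at_left x)"
    using x eventually_at_left_real by blast
  then have "eventually (\<lambda>y. (f y - f x) / (y - x) \<le> R) (at_left x)"
    by (rule eventually_mono) (use convex_chord_le_right_deriv[OF cv _ _ R] in \<open>auto simp: slope_swap\<close>)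
  ultimately show ?thesis by (intro tendsto_upperbound) auto
qed

lemma convex_right_deriv_le_left_deriv:
  fixes f :: "real \<Rightarrow> real"
  assumes cv: "convex_on {0..} f" and "0 \<le> u" "u < v"
    and R: "(f has_real_derivative R) (at_right u)"
    and L: "(f has_real_derivative L) (at_left v)"
  shows "R \<le> L"
  using right_deriv_le_convex_chord[OF cv _ _ R] convex_chord_le_left_deriv[OF cv _ _ L] assms
  by (meson order_trans)

lemma mono_right_deriv_nonneg:
  fixes f :: "real \<Rightarrow> real"
  assumes mono: "\<And>u v. x \<le> u \<Longrightarrow> u \<le> v \<Longrightarrow> f u \<le> f v"
    and R: "(f has_real_derivative R) (at_right x)"
  shows "0 \<le> R"
proof -
  have "((\<lambda>y. (f y - f x) / (y - x)) \<longlongrightarrow> R) (at_right x)"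
    using R by (simp add: has_field_derivative_iff)
  moreover have "eventually (\<lambda>y. y \<in> {x<..<x+1}) (at_right x)"
    using eventually_at_right_real by simp
  then have "eventually (\<lambda>y. 0 \<le> (f y - f x) / (y - x)) (at_right x)"
    by (rule eventually_mono) (use mono in auto)
  ultimately show ?thesis by (intro tendsto_lowerbound) auto
qed

lemma convex_support_line:
  fixes f :: "real \<Rightarrow> real"
  assumes cv: "convex_on {0..} f" and x: "0 \<le> x" and y: "0 \<le> y"
    and R: "(f has_real_derivative D) (at_right x)"
    and L: "0 < x \<Longrightarrow> (f has_real_derivative D) (at_left x)"
  shows "f x + D * (y - x) \<le> f y"
proof (cases y x rule: linorder_cases)
  case less
  then have "(f x - f y) / (x - y) \<le> D" using convex_chord_le_left_deriv[OF cv y less L] y by auto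
  then show ?thesis using less by (simp add: divide_le_eq algebra_simps)
next
  case greater
  then have "D \<le> (f y - f x) / (y - x)" using right_deriv_le_convex_chord[OF cv x greater R] by auto
  then show ?thesis using greater by (simp add: le_divide_eq algebra_simps)
qed simp

text \<open>A convex nondecreasing function has a right derivative at the boundary point 0: its
  difference quotients decrease to their infimum, which is bounded below by 0.\<close>
lemma convex_mono_has_right_deriv_0:
  fixes f :: "real \<Rightarrow> real"
  assumes cv: "convex_on {0..} f" and mono: "\<And>u v. 0 \<le> u \<Longrightarrow> u \<le> v \<Longrightarrow> f u \<le> f v"
  shows "\<exists>D. (f has_real_derivative D) (at_right 0)"
proof -
  define slope where "slope y = (f y - f 0) / (y - 0)" for y
  have "(slope \<longlongrightarrow> Inf (slope ` ({0<..} \<inter> UNIV))) (at 0 within ({0<..} \<inter> UNIV))"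
  proof (rule Lim_right_bound[where K=0])
    fix a b :: real assume ab: "0 < a" "a \<le> b"
    show "slope a \<le> slope b"
    proof (cases "a = b")
      case False
      then have "(f 0 - f a) / (0 - a) \<le> (f 0 - f b) / (0 - b)"
        using convex_on_slope_le(1)[OF cv, of 0 b a] ab by auto
      then show ?thesis unfolding slope_def by (metis slope_swap)
    qed simp
  next
    fix a :: real assume "0 < a"
    then show "0 \<le> slope a" unfolding slope_def using mono[of 0 a] by auto
  qed
  then show ?thesis unfolding has_field_derivative_iff slope_def by auto
qed

lemma cost_deriv_has_derivative:
  assumes C: "cost_ok C" and x: "0 \<le> x"
  shows "(C has_real_derivative cost_deriv C x) (at_right x)"
    and "0 < x \<Longrightarrow> (C has_real_derivative cost_deriv C x) (at_left x)"
proof -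
  have inner: "(C has_real_derivative cost_deriv C x) (at x)" if "0 < x"
    using C that DERIV_deriv_iff_real_differentiable
    unfolding cost_ok_def cost_deriv_def by auto
  show "(C has_real_derivative cost_deriv C x) (at_right x)"
  proof (cases "x = 0")
    case True
    have "\<exists>D. (C has_real_derivative D) (at_right 0)"
      using C by (intro convex_mono_has_right_deriv_0) (auto simp: cost_ok_def)
    then show ?thesis using True has_right_deriv by (simp add: cost_deriv_def)
  qed (use inner x in \<open>auto intro: has_field_derivative_at_within\<close>)
  show "0 < x \<Longrightarrow> (C has_real_derivative cost_deriv C x) (at_left x)"
    using inner by (auto intro: has_field_derivative_at_within)
qed

lemma cost_support_line:
  assumes C: "cost_ok C" and x: "0 \<le> x" and y: "0 \<le> y"
  shows "C x + cost_deriv C x * (y - x) \<le> C y"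
  using C cost_deriv_has_derivative[OF C x] x y
  by (intro convex_support_line) (auto simp: cost_ok_def)

lemma cost_deriv_nonneg:
  assumes C: "cost_ok C" and x: "0 \<le> x"
  shows "0 \<le> cost_deriv C x"
  using C x by (intro mono_right_deriv_nonneg[OF _ cost_deriv_has_derivative(1)[OF C x]])
    (auto simp: cost_ok_def)

lemma affine_has_integral:
  fixes a b c m :: real
  assumes "a \<le> b"
  shows "((\<lambda>q. c + m * q) has_integral (c * (b - a) + m * (b\<^sup>2 - a\<^sup>2) / 2)) {a..b}"
proof -
  have "((\<lambda>q. c + m * q) has_integral ((\<lambda>q. c * q + m * q\<^sup>2 / 2) b - (\<lambda>q. c * q + m * q\<^sup>2 / 2) a)) {a..b}"
  proof (rule fundamental_theorem_of_calculus[OF assms])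
    fix x :: real assume "x \<in> {a..b}"
    have "((\<lambda>q. c * q + m * q\<^sup>2 / 2) has_real_derivative (c + m * x)) (at x within {a..b})"
      by (auto intro!: derivative_eq_intros simp: power2_eq_square)
    then show "((\<lambda>q. c * q + m * q\<^sup>2 / 2) has_vector_derivative (c + m * x)) (at x within {a..b})"
      by (simp add: has_real_derivative_iff_has_vector_derivative)
  qed
  then show ?thesis by (simp add: algebra_simps diff_divide_distrib)
qed

lemma integrable_on_nonneg_interval:
  fixes p :: "real \<Rightarrow> real"
  assumes "continuous_on {0..} p" "0 \<le> u"
  shows "p integrable_on {u..v}"
  by (rule integrable_continuous_interval) (rule continuous_on_subset[OF assms(1)], use assms(2) in auto)

text \<open>A convex function lies above its left tangent at \<open>Z\<close>, which bounds its integral over \<open>[0, Z]\<close>.\<close>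
lemma convex_integral_lower_bound:
  fixes p :: "real \<Rightarrow> real"
  assumes cv: "convex_on {0..} p" and pc: "continuous_on {0..} p" and Z: "0 < Z"
    and L: "(p has_real_derivative L) (at_left Z)"
  shows "p Z * Z - L * Z\<^sup>2 / 2 \<le> integral {0..Z} p"
proof -
  define tangent where "tangent q = (p Z - L * Z) + L * q" for q
  have tangent_int: "(tangent has_integral ((p Z - L * Z) * Z + L * Z\<^sup>2 / 2)) {0..Z}"
    using affine_has_integral[of 0 Z "p Z - L * Z" L] Z unfolding tangent_def by simp
  have "integral {0..Z} tangent \<le> integral {0..Z} p"
  proof (rule integral_le)
    show "tangent integrable_on {0..Z}" using tangent_int by blast
    show "p integrable_on {0..Z}" using integrable_on_nonneg_interval[OF pc] by simp
    fix q assume q: "q \<in> {0..Z}"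
    show "tangent q \<le> p q"
    proof (cases "q = Z")
      case False
      then have "(p Z - p q) / (Z - q) \<le> L"
        using convex_chord_le_left_deriv[OF cv _ _ L] q by auto
      then show ?thesis using False q by (simp add: tangent_def divide_le_eq algebra_simps)
    qed (simp add: tangent_def)
  qed
  then show ?thesis using integral_unique[OF tangent_int] by (simp add: algebra_simps power2_eq_square)
qed

text \<open>Beyond a point where the demand is bounded by a line of slope \<open>-g\<close> (cut off at 0),
  the surplus over a price \<open>\<beta>\<close> is at most the area of the triangle between this line and \<open>\<beta>\<close>.\<close>
lemma integral_tail_surplus:
  fixes p :: "real \<Rightarrow> real"
  assumes pc: "continuous_on {0..} p" and X: "0 \<le> X" "X \<le> Y" and g: "0 < g"
    and \<beta>: "0 \<le> \<beta>" "\<beta> \<le> a"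
    and above: "\<And>q. X \<le> q \<Longrightarrow> p q \<le> max (a - g * (q - X)) 0"
  shows "integral {X..Y} p - \<beta> * (Y - X) \<le> (a - \<beta>)\<^sup>2 / (2 * g)"
proof -
  define w where "w = a - \<beta>"
  define M where "M = min Y (X + w / g)"
  have XM: "X \<le> M" "M \<le> Y" using X \<beta> g unfolding M_def w_def by auto
  have split: "integral {X..M} p + integral {M..Y} p = integral {X..Y} p"
    using Henstock_Kurzweil_Integration.integral_combine[OF XM integrable_on_nonneg_interval[OF pc X(1)]]
    by simp
  have line_int: "((\<lambda>q. (a + g * X) + (- g) * q) has_integral
      ((a + g * X) * (M - X) + (- g) * (M\<^sup>2 - X\<^sup>2) / 2)) {X..M}"
    using affine_has_integral XM by blast
  have "integral {X..M} p \<le> integral {X..M} (\<lambda>q. (a + g * X) + (- g) * q)"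
  proof (rule integral_le)
    show "p integrable_on {X..M}" using integrable_on_nonneg_interval[OF pc X(1)] .
    show "(\<lambda>q. (a + g * X) + (- g) * q) integrable_on {X..M}" using line_int by blast
    fix q assume q: "q \<in> {X..M}"
    then have "g * (q - X) \<le> w" using g unfolding M_def by (simp add: field_simps)
    then show "p q \<le> (a + g * X) + (- g) * q"
      using above[of q] q \<beta> unfolding w_def by (auto simp: algebra_simps)
  qed
  then have near: "integral {X..M} p \<le> (a + g * X) * (M - X) + (- g) * (M\<^sup>2 - X\<^sup>2) / 2"
    using integral_unique[OF line_int] by simp
  have far: "integral {M..Y} p \<le> \<beta> * (Y - M)"
  proof (cases "M = Y")
    case False
    then have M: "M = X + w / g" unfolding M_def by auto
    have "integral {M..Y} p \<le> integral {M..Y} (\<lambda>_. \<beta>)"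
    proof (rule integral_le)
      show "p integrable_on {M..Y}" using integrable_on_nonneg_interval[OF pc] X XM by simp
      fix q assume q: "q \<in> {M..Y}"
      then have "w \<le> g * (q - X)" using g M by (simp add: field_simps)
      then show "p q \<le> \<beta>" using above[of q] q XM \<beta> unfolding w_def by auto
    qed (rule integrable_const_ivl)
    then show ?thesis using XM by (simp add: mult.commute)
  qed simp
  have "(a + g * X) * (M - X) + (- g) * (M\<^sup>2 - X\<^sup>2) / 2 + \<beta> * (Y - M) - \<beta> * (Y - X)
      = w * (M - X) - g * (M - X)\<^sup>2 / 2"
    unfolding w_def by (simp add: power2_eq_square field_simps)
  also have "\<dots> \<le> w\<^sup>2 / (2 * g)"
  proof -
    have "0 \<le> (w - g * (M - X))\<^sup>2" by simp
    then show ?thesis using g by (simp add: field_simps power2_eq_square)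
  qed
  finally show ?thesis using split near far unfolding w_def by linarith
qed

lemma integral_surplus_bound:
  fixes p :: "real \<Rightarrow> real"
  assumes pc: "continuous_on {0..} p" and X: "0 \<le> X" and Y: "0 \<le> Y" and g: "0 < g"
    and \<beta>: "0 \<le> \<beta>" "\<beta> \<le> p X"
    and below: "\<And>q. 0 \<le> q \<Longrightarrow> q \<le> X \<Longrightarrow> p X \<le> p q"
    and above: "\<And>q. X \<le> q \<Longrightarrow> p q \<le> max (p X - g * (q - X)) 0"
  shows "integral {0..Y} p - \<beta> * Y \<le> integral {0..X} p - \<beta> * X + (p X - \<beta>)\<^sup>2 / (2 * g)"
proof (cases "Y \<le> X")
  case True
  have "integral {0..Y} p + integral {Y..X} p = integral {0..X} p"
    using Henstock_Kurzweil_Integration.integral_combine[OF Y True integrable_on_nonneg_interval[OF pc]]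
    by simp
  moreover have "p X * (X - Y) \<le> integral {Y..X} p"
    using integral_le[of "\<lambda>_. p X" "{Y..X}" p] integrable_on_nonneg_interval[OF pc Y] below Y True
    by (auto simp: mult.commute)
  moreover have "\<beta> * (X - Y) \<le> p X * (X - Y)" using True \<beta> by (intro mult_right_mono) auto
  moreover have "0 \<le> (p X - \<beta>)\<^sup>2 / (2 * g)" using g by simp
  ultimately show ?thesis by (simp add: algebra_simps)
next
  case False
  have "integral {0..X} p + integral {X..Y} p = integral {0..Y} p"
    using Henstock_Kurzweil_Integration.integral_combine[OF X _ integrable_on_nonneg_interval[OF pc]] False
    by simp
  moreover have "integral {X..Y} p - \<beta> * (Y - X) \<le> (p X - \<beta>)\<^sup>2 / (2 * g)"
    using False by (intro integral_tail_surplus[OF pc X _ g \<beta> above]) auto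
  ultimately show ?thesis by (simp add: algebra_simps)
qed

text \<open>\<open>phi_bound c\<close> is the larger root of \<open>\<phi>\<^sup>2 + (c - 2) \<phi> - 2 = 0\<close>, unless that root is
  below 1, which happens exactly when \<open>c \<ge> 3\<close>.\<close>
lemma phi_bound_cases:
  fixes c :: real
  shows "1 \<le> phi_bound c"
    and "c * phi_bound c = 2 + 2 * phi_bound c - (phi_bound c)\<^sup>2 \<or> (phi_bound c = 1 \<and> 3 \<le> c)"
proof -
  define S where "S = sqrt (c\<^sup>2 - 4 * c + 12)"
  have "c\<^sup>2 - 4 * c + 12 = (c - 2)\<^sup>2 + 8" by (simp add: power2_eq_square algebra_simps)
  then have disc: "0 \<le> c\<^sup>2 - 4 * c + 12" by (metis add_nonneg_nonneg zero_le_power2 zero_le_numeral)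
  then have S0: "0 \<le> S" and SS: "S\<^sup>2 = c\<^sup>2 - 4 * c + 12"
    unfolding S_def by simp_all
  define r where "r = (2 - c + S) / 2"
  have pb: "phi_bound c = max r 1" unfolding phi_bound_def r_def S_def by simp
  have root: "c * r = 2 + 2 * r - r\<^sup>2"
  proof -
    have "4 * (c * r - (2 + 2 * r - r\<^sup>2)) = S\<^sup>2 - (c\<^sup>2 - 4 * c + 12)"
      unfolding r_def by (simp add: power2_eq_square field_simps)
    then show ?thesis using SS by simp
  qed
  show "1 \<le> phi_bound c" unfolding pb by simp
  show "c * phi_bound c = 2 + 2 * phi_bound c - (phi_bound c)\<^sup>2 \<or> (phi_bound c = 1 \<and> 3 \<le> c)"
  proof (cases "r \<le> 1")
    case True
    then have "S \<le> c" unfolding r_def by simp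
    then have "S\<^sup>2 \<le> c\<^sup>2" using S0 by (simp add: power_mono)
    then show ?thesis using SS True unfolding pb by simp
  qed (use root pb in simp)
qed

lemma f_bound_range:
  fixes c :: real
  assumes "1 \<le> c"
  shows "0 \<le> f_bound c" and "f_bound c \<le> 1"
  using phi_bound_cases(1)[of c] assms unfolding f_bound_def
  by (simp_all add: add_pos_nonneg)

text \<open>The quadratic inequality defining the bound: for \<open>0 \<le> s \<le> X\<close>,
  \<open>f(c) (X\<^sup>2 + 2sX + cs\<^sup>2) \<le> X\<^sup>2 + 2s\<^sup>2\<close>; \<open>\<phi>\<close> is chosen to make it tight.\<close>
lemma f_bound_quadratic:
  fixes c X s :: real
  assumes c: "1 \<le> c" and s: "0 \<le> s" "s \<le> X"
  shows "f_bound c * (X\<^sup>2 + 2 * s * X + c * s\<^sup>2) \<le> X\<^sup>2 + 2 * s\<^sup>2"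
proof -
  define \<phi> where "\<phi> = phi_bound c"
  have \<phi>1: "1 \<le> \<phi>" using phi_bound_cases(1) unfolding \<phi>_def .
  define D where "D = \<phi>\<^sup>2 + 2 * \<phi> + c"
  have D0: "0 < D" unfolding D_def using \<phi>1 c by (simp add: add_pos_nonneg)
  have "(\<phi>\<^sup>2 + 2) * (X\<^sup>2 + 2 * s * X + c * s\<^sup>2) \<le> (X\<^sup>2 + 2 * s\<^sup>2) * D"
    using phi_bound_cases(2)[of c] unfolding \<phi>_def[symmetric]
  proof
    assume root: "c * \<phi> = 2 + 2 * \<phi> - \<phi>\<^sup>2"
    have "\<phi> * ((X\<^sup>2 + 2 * s\<^sup>2) * D - (\<phi>\<^sup>2 + 2) * (X\<^sup>2 + 2 * s * X + c * s\<^sup>2))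
        = (c * \<phi>) * (X\<^sup>2 + 2 * s\<^sup>2 - (\<phi>\<^sup>2 + 2) * s\<^sup>2)
          + \<phi> * ((X\<^sup>2 + 2 * s\<^sup>2) * (\<phi>\<^sup>2 + 2 * \<phi>) - (\<phi>\<^sup>2 + 2) * (X\<^sup>2 + 2 * s * X))"
      unfolding D_def by (simp add: algebra_simps)
    also have "\<dots> = (\<phi>\<^sup>2 + 2) * (X - \<phi> * s)\<^sup>2"
      unfolding root by (simp add: algebra_simps power2_eq_square)
    finally have "0 \<le> \<phi> * ((X\<^sup>2 + 2 * s\<^sup>2) * D - (\<phi>\<^sup>2 + 2) * (X\<^sup>2 + 2 * s * X + c * s\<^sup>2))"
      by simp
    then show ?thesis using \<phi>1 by (simp add: zero_le_mult_iff)
  next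
    assume corner: "\<phi> = 1 \<and> 3 \<le> c"
    have "3 * (X + s) \<le> c * (X + s)" using corner s by (intro mult_right_mono) auto
    then have "0 \<le> (X - s) * (c * X + c * s - 6 * s)"
      using s by (intro mult_nonneg_nonneg) (auto simp: algebra_simps)
    then show ?thesis using corner unfolding D_def by (simp add: algebra_simps power2_eq_square)
  qed
  then show ?thesis
    using D0 unfolding f_bound_def \<phi>_def[symmetric] D_def[symmetric]
    by (simp add: divide_simps mult.commute)
qed

text \<open>The welfare estimate in abstract form: \<open>I\<close> is the consumer surplus, \<open>d\<close>, \<open>g\<close>, \<open>h\<close> are
  the demand slopes at the candidate, at the zero of demand and at 0, \<open>s\<close> is the largest
  output and \<open>w\<close> the price markup over the smallest marginal cost.\<close>
lemma f_bound_welfare_ineq: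
  fixes c I d s X w g h :: real
  assumes c: "1 \<le> c" and s: "0 \<le> s" "s \<le> X" and d: "0 \<le> d" and I: "d * X\<^sup>2 / 2 \<le> I"
    and w: "0 \<le> w" "w \<le> d * s" and dh: "d \<le> h" and g: "0 < g" and ch: "c = h / g"
  shows "f_bound c * (I + w * X + w\<^sup>2 / (2 * g)) \<le> I + d * s\<^sup>2"
proof -
  define f where "f = f_bound c"
  have f0: "0 \<le> f" and f1: "f \<le> 1" using f_bound_range[OF c] unfolding f_def by auto
  have wX: "w * X \<le> d * s * X" using w s by (intro mult_right_mono) auto
  have "w\<^sup>2 \<le> (d * s)\<^sup>2" using w by (intro power_mono) auto
  also have "\<dots> \<le> d * h * s\<^sup>2"
    using mult_right_mono[OF mult_left_mono[OF dh d], of "s\<^sup>2"] by (simp add: power2_eq_square mult_ac)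
  finally have "w\<^sup>2 / (2 * g) \<le> d * h * s\<^sup>2 / (2 * g)" using g by (simp add: divide_right_mono)
  also have "\<dots> = c * d * s\<^sup>2 / 2" unfolding ch using g by (simp add: field_simps)
  finally have w2: "w\<^sup>2 / (2 * g) \<le> c * d * s\<^sup>2 / 2" .
  have "f * (I + w * X + w\<^sup>2 / (2 * g)) \<le> f * (I + d * s * X + c * d * s\<^sup>2 / 2)"
    using wX w2 f0 by (intro mult_left_mono) auto
  also have "\<dots> = f * (I - d * X\<^sup>2 / 2) + (d / 2) * (f * (X\<^sup>2 + 2 * s * X + c * s\<^sup>2))"
    by (simp add: algebra_simps power2_eq_square)
  also have "\<dots> \<le> (I - d * X\<^sup>2 / 2) + (d / 2) * (X\<^sup>2 + 2 * s\<^sup>2)"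
  proof (rule add_mono)
    show "f * (I - d * X\<^sup>2 / 2) \<le> I - d * X\<^sup>2 / 2"
      using f0 f1 I by (simp add: mult_left_le_one_le)
    show "d / 2 * (f * (X\<^sup>2 + 2 * s * X + c * s\<^sup>2)) \<le> d / 2 * (X\<^sup>2 + 2 * s\<^sup>2)"
      using f_bound_quadratic[OF c s] d unfolding f_def by (intro mult_left_mono) auto
  qed
  also have "\<dots> = I + d * s\<^sup>2" by (simp add: algebra_simps)
  finally show ?thesis unfolding f_def .
qed

locale cournot_candidate_market =
  fixes N :: nat and p :: "real \<Rightarrow> real" and C :: "nat \<Rightarrow> real \<Rightarrow> real"
    and Q :: real and x :: "nat \<Rightarrow> real"
  assumes N: "1 \<le> N"
    and costs: "\<And>n. n < N \<Longrightarrow> cost_ok (C n)"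
    and demand: "demand_ok p"
    and demand_convex: "convex_on {0..} p"
    and demand_zero: "0 < Q" "p Q = 0"
    and slope_at_zero: "left_deriv p Q \<noteq> 0"
    and entry: "min_mc0 N C < p 0"
    and candidate: "cournot_candidate N p C x"
begin

definition X :: real where "X = total N x"
definition price :: real where "price = p X"
definition mc :: "nat \<Rightarrow> real" where "mc n = cost_deriv (C n) (x n)"
definition s_max :: real where "s_max = Max (x ` {..<N})"

definition slope_left :: real where "slope_left = - left_deriv p X"
definition slope_right :: real where "slope_right = - right_deriv p X"
definition slope_0 :: real where "slope_0 = - right_deriv p 0"
definition slope_Q :: real where "slope_Q = - left_deriv p Q"

definition beta :: real where "beta = min price (Min (mc ` {..<N}))"
definition markup :: real where "markup = price - beta"

definition consumer_surplus :: real where "consumer_surplus = integral {0..X} p - price * X"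

definition cost_gap :: real where "cost_gap = (\<Sum>n<N. mc n * x n - C n (x n))"

lemma suppliers_nonempty: "{..<N} \<noteq> {}"
  using N by (auto simp: lessThan_empty_iff)

lemma p_continuous: "continuous_on {0..} p"
  and p_nonneg: "0 \<le> q \<Longrightarrow> 0 \<le> p q"
  and p_antimono: "0 \<le> u \<Longrightarrow> u \<le> v \<Longrightarrow> p v \<le> p u"
  and p_right_deriv: "0 \<le> q \<Longrightarrow> (p has_real_derivative right_deriv p q) (at_right q)"
  and p_left_deriv: "0 < q \<Longrightarrow> (p has_real_derivative left_deriv p q) (at_left q)"
  using demand has_right_deriv has_left_deriv unfolding demand_ok_def by auto

lemma x_nonneg: "n < N \<Longrightarrow> 0 \<le> x n"
  using candidate unfolding cournot_candidate_def nonneg_vec_def by auto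

lemma mc_upper: "n < N \<Longrightarrow> 0 < x n \<Longrightarrow> mc n \<le> price - x n * slope_left"
  and mc_lower: "n < N \<Longrightarrow> price - x n * slope_right \<le> mc n"
  using candidate unfolding cournot_candidate_def mc_def price_def X_def slope_left_def slope_right_def
  by auto

lemma mc_nonneg: "n < N \<Longrightarrow> 0 \<le> mc n"
  unfolding mc_def using cost_deriv_nonneg costs x_nonneg by blast

lemma X_nonneg: "0 \<le> X"
  unfolding X_def total_def using x_nonneg by (intro sum_nonneg) auto

text \<open>Assumption 4: some supplier finds it profitable to produce, so the total output is positive.\<close>
lemma X_pos: "0 < X"
proof (rule ccontr)
  assume "\<not> 0 < X"
  then have "X = 0" using X_nonneg by simp
  then have "x n = 0" if "n < N" for n
    using sum_nonneg_eq_0_iff[of "{..<N}" x] x_nonneg that unfolding X_def total_def by auto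
  then have "p 0 \<le> cost_deriv (C n) 0" if "n < N" for n
    using mc_lower[OF that] that \<open>X = 0\<close> unfolding mc_def price_def by auto
  then have "p 0 \<le> min_mc0 N C"
    unfolding min_mc0_def using suppliers_nonempty by (auto simp: Min_ge_iff)
  then show False using entry by simp
qed

lemma right_deriv_nonpos:
  assumes "0 \<le> q" shows "right_deriv p q \<le> 0"
proof -
  have "right_deriv p q \<le> (p (q + 1) - p q) / (q + 1 - q)"
    using right_deriv_le_convex_chord[OF demand_convex assms, of "q + 1"] p_right_deriv[OF assms] by simp
  also have "\<dots> \<le> 0" using p_antimono[OF assms, of "q + 1"] by simp
  finally show ?thesis .
qed

text \<open>Ordering of the demand slopes, by convexity; \<open>slope_Q > 0\<close> is the finiteness of \<open>\<mu>\<close>.\<close>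
lemma slopes: "0 \<le> slope_right" "slope_right \<le> slope_left" "slope_left \<le> slope_0"
  "0 < slope_Q" "slope_Q \<le> slope_0"
proof -
  show "0 \<le> slope_right" using right_deriv_nonpos X_nonneg unfolding slope_right_def by simp
  show "slope_right \<le> slope_left"
    using convex_left_deriv_le_right_deriv[OF demand_convex X_pos p_left_deriv p_right_deriv] X_pos
    unfolding slope_left_def slope_right_def by simp
  show "slope_left \<le> slope_0"
    using convex_right_deriv_le_left_deriv[OF demand_convex _ X_pos p_right_deriv p_left_deriv] X_pos
    unfolding slope_left_def slope_0_def by simp
  have "left_deriv p Q \<le> right_deriv p Q"
    using convex_left_deriv_le_right_deriv[OF demand_convex _ p_left_deriv p_right_deriv] demand_zero
    by simp
  then show "0 < slope_Q"
    using right_deriv_nonpos[of Q] demand_zero slope_at_zero unfolding slope_Q_def by simp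
  show "slope_Q \<le> slope_0"
    using convex_right_deriv_le_left_deriv[OF demand_convex _ _ p_right_deriv p_left_deriv] demand_zero
    unfolding slope_Q_def slope_0_def by simp
qed

lemma s_max: "0 \<le> s_max" "s_max \<le> X" "\<And>n. n < N \<Longrightarrow> x n \<le> s_max" "s_max\<^sup>2 \<le> (\<Sum>n<N. (x n)\<^sup>2)"
proof -
  have "s_max \<in> x ` {..<N}" unfolding s_max_def using suppliers_nonempty by (intro Max_in) auto
  then obtain m where m: "m < N" "x m = s_max" by auto
  show "0 \<le> s_max" using x_nonneg[OF m(1)] m(2) by simp
  show "s_max \<le> X" unfolding X_def total_def m(2)[symmetric]
    by (rule member_le_sum) (use m x_nonneg in auto)
  show "\<And>n. n < N \<Longrightarrow> x n \<le> s_max" unfolding s_max_def by simp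
  show "s_max\<^sup>2 \<le> (\<Sum>n<N. (x n)\<^sup>2)"
    unfolding m(2)[symmetric] by (rule member_le_sum) (use m in auto)
qed

lemma beta: "0 \<le> beta" "beta \<le> price" "\<And>n. n < N \<Longrightarrow> beta \<le> mc n"
  using p_nonneg[OF X_nonneg] mc_nonneg suppliers_nonempty unfolding beta_def price_def
  by (auto simp: Min_ge_iff intro: min.coboundedI2)

text \<open>The markup is at most \<open>slope_right\<close> times the output of the supplier with the lowest
  marginal cost, hence at most \<open>slope_left\<close> times the largest output.\<close>
lemma markup_bound: "0 \<le> markup" "markup \<le> slope_left * s_max"
proof -
  show "0 \<le> markup" using beta unfolding markup_def by simp
  have "markup \<le> slope_right * s_max"
  proof (cases "beta = price")
    case False
    then have "beta = Min (mc ` {..<N})" unfolding beta_def by auto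
    moreover have "Min (mc ` {..<N}) \<in> mc ` {..<N}" using suppliers_nonempty by (intro Min_in) auto
    ultimately obtain k where k: "k < N" "beta = mc k" by auto
    have "price - mc k \<le> slope_right * x k" using mc_lower[OF k(1)] by (simp add: algebra_simps)
    also have "\<dots> \<le> slope_right * s_max" using s_max(3)[OF k(1)] slopes(1) by (intro mult_left_mono)
    finally show ?thesis unfolding markup_def k(2) .
  qed (use slopes(1) s_max(1) in \<open>simp add: markup_def\<close>)
  also have "\<dots> \<le> slope_left * s_max" using slopes(2) s_max(1) by (intro mult_right_mono)
  finally show "markup \<le> slope_left * s_max" .
qed

lemma demand_below_line:
  assumes q: "X \<le> q" shows "p q \<le> max (price - slope_Q * (q - X)) 0"
proof (cases "Q \<le> q \<or> q = X")
  case True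
  then show ?thesis using p_antimono[of Q q] demand_zero unfolding price_def by auto
next
  case False
  then have XQ: "X < Q" "q < Q" using q by auto
  have "convex_on {X..Q} p" by (rule convex_on_subset[OF demand_convex]) (use X_nonneg in auto)
  then have "p q \<le> (p Q - p X) / (Q - X) * (q - X) + p X"
    using convex_onD_Icc'[of X Q p q] q XQ by simp
  also have "\<dots> \<le> left_deriv p Q * (q - X) + p X"
    using convex_chord_le_left_deriv[OF demand_convex X_nonneg XQ(1) p_left_deriv] q demand_zero
    by (intro add_right_mono mult_right_mono) auto
  finally show ?thesis unfolding slope_Q_def price_def by (simp add: algebra_simps)
qed

text \<open>Each cost function lies above its tangent line at the candidate output, evaluated at 0.\<close>
lemma cost_gap_nonneg: "0 \<le> cost_gap"
  unfolding cost_gap_def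
proof (rule sum_nonneg)
  fix n assume "n \<in> {..<N}"
  then have n: "n < N" by simp
  have "C n (x n) + mc n * (0 - x n) \<le> C n 0"
    using cost_support_line[OF costs[OF n] x_nonneg[OF n], of 0] unfolding mc_def by simp
  then show "0 \<le> mc n * x n - C n (x n)" using costs n unfolding cost_ok_def by auto
qed

lemma welfare_upper:
  assumes y: "nonneg_vec N y"
  shows "welfare N p C y \<le> consumer_surplus + markup * X + markup\<^sup>2 / (2 * slope_Q) + cost_gap"
proof -
  define Y where "Y = total N y"
  have y0: "n < N \<Longrightarrow> 0 \<le> y n" for n using y unfolding nonneg_vec_def by auto
  have "(\<Sum>n<N. C n (x n) + mc n * (y n - x n)) \<le> (\<Sum>n<N. C n (y n))"
    by (rule sum_mono) (use cost_support_line costs x_nonneg y0 in \<open>auto simp: mc_def\<close>)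
  moreover have "(\<Sum>n<N. C n (x n) + mc n * (y n - x n)) = (\<Sum>n<N. mc n * y n) - cost_gap"
    unfolding cost_gap_def by (simp add: sum_subtractf[symmetric] sum.distrib[symmetric] algebra_simps)
  moreover have "beta * Y \<le> (\<Sum>n<N. mc n * y n)"
    unfolding Y_def total_def sum_distrib_left
    by (rule sum_mono) (use beta y0 in \<open>auto intro: mult_right_mono\<close>)
  moreover have "integral {0..Y} p - beta * Y
      \<le> integral {0..X} p - beta * X + (price - beta)\<^sup>2 / (2 * slope_Q)"
    unfolding price_def
    by (rule integral_surplus_bound[OF p_continuous X_nonneg _ slopes(4)])
      (use y0 beta demand_below_line p_antimono in \<open>auto simp: Y_def total_def price_def intro: sum_nonneg\<close>)
  ultimately show ?thesis
    unfolding welfare_def Y_def[symmetric] consumer_surplus_def markup_def by (simp add: algebra_simps)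
qed

text \<open>Lower bound on the welfare of the candidate: each supplier's markup is at least
  \<open>slope_left\<close> times its output.\<close>
lemma welfare_lower: "consumer_surplus + slope_left * s_max\<^sup>2 + cost_gap \<le> welfare N p C x"
proof -
  have "mc n * x n \<le> price * x n - slope_left * (x n)\<^sup>2" if n: "n < N" for n
  proof (cases "x n = 0")
    case False
    then have "0 < x n" using x_nonneg[OF n] by simp
    then show ?thesis using mult_right_mono[OF mc_upper[OF n], of "x n"]
      by (simp add: algebra_simps power2_eq_square)
  qed simp
  then have "(\<Sum>n<N. mc n * x n) \<le> (\<Sum>n<N. price * x n - slope_left * (x n)\<^sup>2)"
    by (intro sum_mono) auto
  also have "\<dots> = price * X - slope_left * (\<Sum>n<N. (x n)\<^sup>2)"
    unfolding X_def total_def by (simp add: sum_subtractf sum_distrib_left)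
  also have "\<dots> \<le> price * X - slope_left * s_max\<^sup>2"
    using s_max(4) slopes(1,2) by (simp add: mult_left_mono)
  finally show ?thesis
    unfolding welfare_def X_def[symmetric] consumer_surplus_def cost_gap_def
    by (simp add: sum_subtractf)
qed

text \<open>The consumer surplus is at least the triangle under the left tangent of the demand at \<open>X\<close>.\<close>
lemma consumer_surplus_lower: "slope_left * X\<^sup>2 / 2 \<le> consumer_surplus"
  using convex_integral_lower_bound[OF demand_convex p_continuous X_pos p_left_deriv[OF X_pos]]
  unfolding consumer_surplus_def slope_left_def price_def by simp

text \<open>The candidate has positive welfare: either the largest supplier's markup contributes a
  positive term, or the market is saturated (\<open>X \<ge> Q\<close>) and the consumer surplus is positive.\<close>
lemma welfare_pos: "0 < welfare N p C x"
proof (cases "X < Q")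
  case True
  have "right_deriv p X \<le> left_deriv p Q"
    using convex_right_deriv_le_left_deriv[OF demand_convex X_nonneg True p_right_deriv p_left_deriv]
      X_nonneg demand_zero by simp
  then have "0 < slope_left" using slopes unfolding slope_Q_def slope_right_def by simp
  moreover have "0 < s_max"
  proof (rule ccontr)
    assume "\<not> 0 < s_max"
    then have "X \<le> real N * s_max"
      using sum_bounded_above[of "{..<N}" x s_max] s_max(3) unfolding X_def total_def by auto
    also have "\<dots> \<le> 0" using \<open>\<not> 0 < s_max\<close> by (simp add: mult_nonneg_nonpos)
    finally show False using X_pos by simp
  qed
  ultimately have "0 < slope_left * s_max\<^sup>2" by simp
  moreover have "0 \<le> slope_left * X\<^sup>2 / 2" using slopes(1,2) by simp
  then have "0 \<le> consumer_surplus" using consumer_surplus_lower by linarith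
  ultimately show ?thesis using welfare_lower cost_gap_nonneg by simp
next
  case False
  then have "price = 0" using p_antimono[of Q X] p_nonneg[of X] demand_zero unfolding price_def by simp
  have "integral {0..Q} p + integral {Q..X} p = integral {0..X} p"
    using Henstock_Kurzweil_Integration.integral_combine[of 0 Q X p] demand_zero False
      integrable_on_nonneg_interval[OF p_continuous] by simp
  moreover have "0 \<le> integral {Q..X} p"
    using integrable_on_nonneg_interval[OF p_continuous] demand_zero p_nonneg
    by (intro integral_nonneg) auto
  moreover have "p Q * Q - left_deriv p Q * Q\<^sup>2 / 2 \<le> integral {0..Q} p"
    using convex_integral_lower_bound[OF demand_convex p_continuous demand_zero(1) p_left_deriv] demand_zero
    by simp
  moreover have "0 < slope_Q * Q\<^sup>2 / 2" using slopes demand_zero by simp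
  ultimately have "0 < consumer_surplus"
    unfolding consumer_surplus_def \<open>price = 0\<close> slope_Q_def using demand_zero by simp
  moreover have "0 \<le> slope_left * s_max\<^sup>2" using slopes(1,2) by simp
  ultimately show ?thesis using welfare_lower cost_gap_nonneg by linarith
qed

theorem efficiency_bound:
  assumes opt: "social_optimum N p C xS"
  shows "f_bound (slope_0 / slope_Q) \<le> efficiency N p C xS x"
proof -
  define f where "f = f_bound (slope_0 / slope_Q)"
  have c1: "1 \<le> slope_0 / slope_Q" using slopes by simp
  have "f * welfare N p C xS
      \<le> f * (consumer_surplus + markup * X + markup\<^sup>2 / (2 * slope_Q)) + f * cost_gap"
    using welfare_upper[of xS] opt f_bound_range[OF c1]
    unfolding social_optimum_def f_def by (simp add: mult_left_mono distrib_left[symmetric])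
  also have "\<dots> \<le> consumer_surplus + slope_left * s_max\<^sup>2 + cost_gap"
    using f_bound_welfare_ineq[OF c1 s_max(1,2) _ consumer_surplus_lower markup_bound _ slopes(4)]
      f_bound_range[OF c1] cost_gap_nonneg slopes
    unfolding f_def by (simp add: add_mono mult_left_le_one_le)
  also have "\<dots> \<le> welfare N p C x" by (rule welfare_lower)
  finally have "f * welfare N p C xS \<le> welfare N p C x" .
  moreover have "0 < welfare N p C xS"
    using welfare_pos opt candidate unfolding social_optimum_def cournot_candidate_def by force
  ultimately show ?thesis unfolding efficiency_def f_def by (simp add: le_divide_eq)
qed

end

theorem corollary1:
  fixes N :: nat and p :: "real \<Rightarrow> real" and C :: "nat \<Rightarrow> real \<Rightarrow> real"
    and Q :: real and xS x :: "nat \<Rightarrow> real"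
  assumes N: "N \<ge> 1"
    and A1: "\<forall>n<N. cost_ok (C n)"
    and A2: "demand_ok p"
    and A3: "\<exists>R>0. p R \<le> min_mc0 N C"
    and A4: "p 0 > min_mc0 N C"
    and pconv: "convex_on {0..} p"
    and Q: "Q > 0" "p Q = 0"
    and fin: "left_deriv p Q \<noteq> 0"
    and opt: "social_optimum N p C xS"
    and cc: "cournot_candidate N p C x"
  shows "efficiency N p C xS x \<ge> f_bound (right_deriv p 0 / left_deriv p Q)"
proof -
  interpret market: cournot_candidate_market N p C Q x
    using N A1 A2 pconv Q fin A4 cc by unfold_locales auto
  have "market.slope_0 / market.slope_Q = right_deriv p 0 / left_deriv p Q"
    unfolding market.slope_0_def market.slope_Q_def by simp
  then show ?thesis using market.efficiency_bound[OF opt] by simp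
qed

end
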